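(* Let $G=(V,E,w)$ be a weighted graph with matrix $W$, and let $\theta\in[0,1]^V$ satisfy $W\theta\ge\mathbf 1$ coordinatewise. Let $\mathcal{D}$ be the distribution of a random subset $S\subseteq V$ that includes each $v\in V$ independently with probability $\theta_v$. Then (i) $\mathbb{E}_{S\sim\mathcal{D}}[|S|]=\|\theta\|_1$; (ii) $\mathbb{E}_{S\sim\mathcal{D}}[\mathrm{Induced}(S)]\le\|\theta\|_1^2+\|\theta\|_1$; (iii) $\mathbb{E}_{S\sim\mathcal{D}}[\mathrm{Cut}(S,V\setminus S)]\ge|V|-2\|\theta\|_1$.
   Context: $W=(W_{u,v})_{u,v\in V}$ is a symmetric matrix with entries in $[0,1]$ and $W_{v,v}=1$; the weighted graph has edges $\{u,v\}$, $u\neq v$, with $W_{u,v}>0$ and weight $W_{u,v}$. For $S\subseteq V$: $\mathrm{Cut}(S,V\setminus S)=\sum_{u\in S}\sum_{v\in V\setminus S}W_{u,v}$ and $\mathrm{Induced}(S)=\sum_{u\in S}\sum_{v\in S}W_{u,v}$. *)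

theory Defs
  imports "HOL-Probability.Probability"
begin

definition Cut :: "('a \<Rightarrow> 'a \<Rightarrow> real) \<Rightarrow> 'a set \<Rightarrow> 'a set \<Rightarrow> real" where
  "Cut W S T = (\<Sum>u\<in>S. \<Sum>v\<in>T. W u v)"

definition Induced :: "('a \<Rightarrow> 'a \<Rightarrow> real) \<Rightarrow> 'a set \<Rightarrow> real" where
  "Induced W S = (\<Sum>u\<in>S. \<Sum>v\<in>S. W u v)"

definition rand_subset :: "'a set \<Rightarrow> ('a \<Rightarrow> real) \<Rightarrow> 'a set pmf" where
  "rand_subset V \<theta> = map_pmf (\<lambda>f. {v\<in>V. f v}) (Pi_pmf V False (\<lambda>v. bernoulli_pmf (\<theta> v)))"

end

theory Submission imports Defs begin

text \<open>
  By linearity of expectation everything reduces to the inclusion probabilities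
  \<open>P[u \<in> S] = \<theta> u\<close> and \<open>P[u \<in> S \<and> v \<in> S] = \<theta> u * \<theta> v\<close> for \<open>u \<noteq> v\<close>, which follow from
  independence.  Thus \<open>E[Induced W S] = \<Sum>\<^sub>u\<^sub>v W u v \<theta> u \<theta> v + \<Sum>\<^sub>v W v v \<theta> v (1 - \<theta> v)\<close>,
  which is at most \<open>\<parallel>\<theta>\<parallel>\<^sub>1\<^sup>2 + \<parallel>\<theta>\<parallel>\<^sub>1\<close> as \<open>W \<le> 1\<close>.  Since \<open>Cut W S (V - S) = Cut W S V - Induced W S\<close>,
  symmetry of \<open>W\<close> gives \<open>E[Cut W S (V - S)] = \<Sum>\<^sub>v (1 - \<theta> v) (W\<theta>)\<^sub>v - \<Sum>\<^sub>v W v v \<theta> v (1 - \<theta> v)\<close>,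
  and the covering condition \<open>(W\<theta>)\<^sub>v \<ge> 1\<close> bounds this below by
  \<open>\<Sum>\<^sub>v (1 - \<theta> v)\<^sup>2 \<ge> |V| - 2 \<parallel>\<theta>\<parallel>\<^sub>1\<close>.
\<close>

lemma set_pmf_rand_subset: "S \<in> set_pmf (rand_subset V \<theta>) \<Longrightarrow> S \<subseteq> V"
  by (auto simp: rand_subset_def)

lemma finite_set_pmf_rand_subset:
  assumes "finite V"
  shows "finite (set_pmf (rand_subset V \<theta>))"
  using assms by (auto simp: rand_subset_def set_Pi_pmf intro!: finite_PiE_dflt)

lemma integrable_rand_subset:
  fixes f :: "'a set \<Rightarrow> real"
  assumes "finite V"
  shows "integrable (measure_pmf (rand_subset V \<theta>)) f"
  using assms by (intro integrable_measure_pmf_finite finite_set_pmf_rand_subset)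

lemma expectation_rand_subset_cong:
  fixes f g :: "'a set \<Rightarrow> real"
  assumes "\<And>S. S \<subseteq> V \<Longrightarrow> f S = g S"
  shows "measure_pmf.expectation (rand_subset V \<theta>) f = measure_pmf.expectation (rand_subset V \<theta>) g"
  using assms by (intro integral_cong_AE) (auto simp: AE_measure_pmf_iff dest: set_pmf_rand_subset)

lemma expectation_rand_subset_superset:
  assumes "finite V" "A \<subseteq> V" "\<forall>v\<in>A. 0 \<le> \<theta> v \<and> \<theta> v \<le> 1"
  shows "measure_pmf.expectation (rand_subset V \<theta>) (\<lambda>S. of_bool (A \<subseteq> S)) = (\<Prod>v\<in>A. \<theta> v)"
proof -
  define g where "g v = (\<lambda>b. if v \<in> A then of_bool b else 1 :: real)" for v
  have "of_bool (A \<subseteq> {v\<in>V. f v}) = (\<Prod>v\<in>V. g v (f v))" for f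
    using assms(1,2) finite_subset[OF assms(2,1)]
    by (auto simp: g_def prod.If_cases Int_absorb1 subset_iff prod_zero_iff)
  then have "measure_pmf.expectation (rand_subset V \<theta>) (\<lambda>S. of_bool (A \<subseteq> S))
      = measure_pmf.expectation (Pi_pmf V False (\<lambda>v. bernoulli_pmf (\<theta> v))) (\<lambda>f. \<Prod>v\<in>V. g v (f v))"
    by (simp add: rand_subset_def)
  also have "\<dots> = (\<Prod>v\<in>V. measure_pmf.expectation (bernoulli_pmf (\<theta> v)) (g v))"
    using assms(1) by (intro expectation_prod_Pi_pmf) (auto simp: g_def integrable_measure_pmf_finite)
  also have "\<dots> = (\<Prod>v\<in>V. if v \<in> A then \<theta> v else 1)"
    using assms(3) by (intro prod.cong) (auto simp: g_def)
  also have "\<dots> = (\<Prod>v\<in>A. \<theta> v)"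
    using assms(1,2) by (simp add: prod.If_cases Int_absorb1)
  finally show ?thesis .
qed

lemma expectation_rand_subset_mem:
  assumes "finite V" "u \<in> V" "0 \<le> \<theta> u" "\<theta> u \<le> 1"
  shows "measure_pmf.expectation (rand_subset V \<theta>) (\<lambda>S. of_bool (u \<in> S)) = \<theta> u"
  using expectation_rand_subset_superset[of V "{u}" \<theta>] assms by simp

lemma expectation_rand_subset_mem_pair:
  assumes "finite V" "u \<in> V" "v \<in> V" "\<forall>v\<in>V. 0 \<le> \<theta> v \<and> \<theta> v \<le> 1"
  shows "measure_pmf.expectation (rand_subset V \<theta>) (\<lambda>S. of_bool (u \<in> S) * of_bool (v \<in> S))
    = \<theta> u * \<theta> v + (if u = v then \<theta> u * (1 - \<theta> u) else 0)"
proof -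
  have "(\<lambda>S. of_bool (u \<in> S) * of_bool (v \<in> S) :: real) = (\<lambda>S. of_bool ({u, v} \<subseteq> S))"
    by auto
  then show ?thesis
    using expectation_rand_subset_superset[of V "{u, v}" \<theta>] assms by (auto simp: algebra_simps)
qed

lemma expectation_card_rand_subset:
  assumes "finite V" "\<forall>v\<in>V. 0 \<le> \<theta> v \<and> \<theta> v \<le> 1"
  shows "measure_pmf.expectation (rand_subset V \<theta>) (\<lambda>S. real (card S)) = (\<Sum>v\<in>V. \<theta> v)"
proof -
  have "measure_pmf.expectation (rand_subset V \<theta>) (\<lambda>S. real (card S))
      = measure_pmf.expectation (rand_subset V \<theta>) (\<lambda>S. \<Sum>v\<in>V. of_bool (v \<in> S))"
    using assms(1) by (intro expectation_rand_subset_cong) (simp add: Int_absorb1)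
  also have "\<dots> = (\<Sum>v\<in>V. \<theta> v)"
    using assms by (subst Bochner_Integration.integral_sum)
      (auto simp: integrable_rand_subset expectation_rand_subset_mem)
  finally show ?thesis .
qed

lemma expectation_Induced_rand_subset:
  assumes "finite V" "\<forall>v\<in>V. 0 \<le> \<theta> v \<and> \<theta> v \<le> 1"
  shows "measure_pmf.expectation (rand_subset V \<theta>) (\<lambda>S. Induced W S)
    = (\<Sum>u\<in>V. \<Sum>v\<in>V. W u v * \<theta> u * \<theta> v) + (\<Sum>v\<in>V. W v v * \<theta> v * (1 - \<theta> v))"
proof -
  have "measure_pmf.expectation (rand_subset V \<theta>) (\<lambda>S. Induced W S)
      = measure_pmf.expectation (rand_subset V \<theta>)
          (\<lambda>S. \<Sum>u\<in>V. \<Sum>v\<in>V. W u v * (of_bool (u \<in> S) * of_bool (v \<in> S)))"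
  proof (intro expectation_rand_subset_cong)
    fix S assume "S \<subseteq> V"
    then have "Induced W S = (\<Sum>u\<in>V. of_bool (u \<in> S) * (\<Sum>v\<in>V. of_bool (v \<in> S) * W u v))"
      using assms(1) by (simp add: Induced_def Int_absorb1)
    then show "Induced W S = (\<Sum>u\<in>V. \<Sum>v\<in>V. W u v * (of_bool (u \<in> S) * of_bool (v \<in> S)))"
      by (simp add: sum_distrib_left mult_ac)
  qed
  also have "\<dots> = (\<Sum>u\<in>V. \<Sum>v\<in>V. W u v
      * (\<theta> u * \<theta> v + (if u = v then \<theta> u * (1 - \<theta> u) else 0)))"
    using assms by (simp add: integrable_rand_subset expectation_rand_subset_mem_pair)
  also have "\<dots> = (\<Sum>u\<in>V. \<Sum>v\<in>V. W u v * \<theta> u * \<theta> v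
      + (if u = v then W u u * \<theta> u * (1 - \<theta> u) else 0))"
    by (intro sum.cong) (auto simp: algebra_simps)
  also have "\<dots> = (\<Sum>u\<in>V. \<Sum>v\<in>V. W u v * \<theta> u * \<theta> v) + (\<Sum>v\<in>V. W v v * \<theta> v * (1 - \<theta> v))"
    using assms(1) by (simp add: sum.distrib)
  finally show ?thesis .
qed

lemma Cut_Diff_eq:
  assumes "finite V" "S \<subseteq> V"
  shows "Cut W S (V - S) = Cut W S V - Induced W S"
  using assms finite_subset[OF assms(2,1)]
  by (simp add: Cut_def Induced_def sum_diff sum_subtractf)

lemma expectation_Cut_rand_subset:
  assumes "finite V" "\<forall>v\<in>V. 0 \<le> \<theta> v \<and> \<theta> v \<le> 1"
  shows "measure_pmf.expectation (rand_subset V \<theta>) (\<lambda>S. Cut W S (V - S))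
    = (\<Sum>u\<in>V. \<Sum>v\<in>V. W u v * \<theta> u * (1 - \<theta> v)) - (\<Sum>v\<in>V. W v v * \<theta> v * (1 - \<theta> v))"
proof -
  have "measure_pmf.expectation (rand_subset V \<theta>) (\<lambda>S. Cut W S (V - S))
      = measure_pmf.expectation (rand_subset V \<theta>)
          (\<lambda>S. (\<Sum>u\<in>V. of_bool (u \<in> S) * (\<Sum>v\<in>V. W u v)) - Induced W S)"
    using assms(1) by (intro expectation_rand_subset_cong)
      (simp add: Cut_Diff_eq, simp add: Cut_def Int_absorb1)
  also have "\<dots> = (\<Sum>u\<in>V. \<theta> u * (\<Sum>v\<in>V. W u v))
      - measure_pmf.expectation (rand_subset V \<theta>) (\<lambda>S. Induced W S)"
    using assms by (simp add: integrable_rand_subset expectation_rand_subset_mem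
      del: sum_of_bool_mult_eq)
  also have "\<dots> = (\<Sum>u\<in>V. \<Sum>v\<in>V. W u v * \<theta> u * (1 - \<theta> v)) - (\<Sum>v\<in>V. W v v * \<theta> v * (1 - \<theta> v))"
    using assms by (simp add: expectation_Induced_rand_subset sum_distrib_left sum_subtractf
      algebra_simps)
  finally show ?thesis .
qed

lemma expectation_Induced_rand_subset_le:
  assumes "finite V" "\<forall>u\<in>V. \<forall>v\<in>V. W u v \<le> 1" "\<forall>v\<in>V. 0 \<le> \<theta> v \<and> \<theta> v \<le> 1"
  shows "measure_pmf.expectation (rand_subset V \<theta>) (\<lambda>S. Induced W S)
    \<le> (\<Sum>v\<in>V. \<theta> v)^2 + (\<Sum>v\<in>V. \<theta> v)"
proof -
  have "(\<Sum>u\<in>V. \<Sum>v\<in>V. W u v * \<theta> u * \<theta> v) \<le> (\<Sum>u\<in>V. \<Sum>v\<in>V. \<theta> u * \<theta> v)"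
    using assms(2,3) mult_left_le[of "W _ _" "\<theta> _ * \<theta> _"]
    by (intro sum_mono) (simp add: mult_ac)
  moreover have "(\<Sum>v\<in>V. W v v * \<theta> v * (1 - \<theta> v)) \<le> (\<Sum>v\<in>V. \<theta> v)"
  proof (intro sum_mono)
    fix v assume "v \<in> V"
    then have "W v v * (\<theta> v * (1 - \<theta> v)) \<le> \<theta> v * (1 - \<theta> v)" "\<theta> v * (1 - \<theta> v) \<le> \<theta> v"
      using assms(2,3) mult_left_le[of "W v v" "\<theta> v * (1 - \<theta> v)"] mult_left_le[of "1 - \<theta> v" "\<theta> v"]
      by (simp_all add: mult_ac)
    then show "W v v * \<theta> v * (1 - \<theta> v) \<le> \<theta> v"
      by (simp add: mult.assoc)
  qed
  ultimately show ?thesis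
    using assms(1,3) by (simp add: expectation_Induced_rand_subset power2_eq_square sum_product)
qed

lemma expectation_Cut_rand_subset_ge:
  assumes "finite V" "\<forall>u\<in>V. \<forall>v\<in>V. W u v = W v u" "\<forall>v\<in>V. W v v \<le> 1"
    and "\<forall>v\<in>V. 0 \<le> \<theta> v \<and> \<theta> v \<le> 1" "\<forall>u\<in>V. (\<Sum>v\<in>V. W u v * \<theta> v) \<ge> 1"
  shows "real (card V) - 2 * (\<Sum>v\<in>V. \<theta> v)
    \<le> measure_pmf.expectation (rand_subset V \<theta>) (\<lambda>S. Cut W S (V - S))"
proof -
  have "(\<Sum>u\<in>V. \<Sum>v\<in>V. W u v * \<theta> u * (1 - \<theta> v))
      = (\<Sum>v\<in>V. (1 - \<theta> v) * (\<Sum>u\<in>V. W v u * \<theta> u))"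
    using assms(2) by (subst sum.swap) (auto simp: sum_distrib_left mult_ac intro!: sum.cong)
  also have "\<dots> \<ge> (\<Sum>v\<in>V. 1 - \<theta> v)"
    using assms(4,5) mult_left_mono[of 1 "\<Sum>u\<in>V. W _ u * \<theta> u" "1 - \<theta> _"]
    by (intro sum_mono) simp
  finally have "(\<Sum>v\<in>V. 1 - \<theta> v) \<le> (\<Sum>u\<in>V. \<Sum>v\<in>V. W u v * \<theta> u * (1 - \<theta> v))" .
  moreover have "(\<Sum>v\<in>V. W v v * \<theta> v * (1 - \<theta> v)) \<le> (\<Sum>v\<in>V. \<theta> v * (1 - \<theta> v))"
    using assms(3,4) mult_left_le[of "W _ _" "\<theta> _ * (1 - \<theta> _)"]
    by (intro sum_mono) (simp add: mult_ac)
  moreover have "(\<Sum>v\<in>V. 1 - 2 * \<theta> v) \<le> (\<Sum>v\<in>V. 1 - \<theta> v) - (\<Sum>v\<in>V. \<theta> v * (1 - \<theta> v))"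
    by (simp add: sum_subtractf[symmetric] sum_mono algebra_simps)
  ultimately show ?thesis
    using assms(1,4) by (simp add: expectation_Cut_rand_subset sum_subtractf sum_distrib_left)
qed

theorem lemma5p2:
  fixes V :: "'a set" and W :: "'a \<Rightarrow> 'a \<Rightarrow> real" and \<theta> :: "'a \<Rightarrow> real"
  assumes finV: "finite V"
    and W_sym: "\<forall>u\<in>V. \<forall>v\<in>V. W u v = W v u"
    and W_range: "\<forall>u\<in>V. \<forall>v\<in>V. 0 \<le> W u v \<and> W u v \<le> 1"
    and W_diag: "\<forall>v\<in>V. W v v = 1"
    and \<theta>_range: "\<forall>v\<in>V. 0 \<le> \<theta> v \<and> \<theta> v \<le> 1"
    and cover: "\<forall>u\<in>V. (\<Sum>v\<in>V. W u v * \<theta> v) \<ge> 1"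
  shows "(measure_pmf.expectation (rand_subset V \<theta>) (\<lambda>S. real (card S)) = (\<Sum>v\<in>V. \<bar>\<theta> v\<bar>))
    \<and> (measure_pmf.expectation (rand_subset V \<theta>) (\<lambda>S. Induced W S)
           \<le> (\<Sum>v\<in>V. \<bar>\<theta> v\<bar>)^2 + (\<Sum>v\<in>V. \<bar>\<theta> v\<bar>))
    \<and> (measure_pmf.expectation (rand_subset V \<theta>) (\<lambda>S. Cut W S (V - S))
           \<ge> real (card V) - 2 * (\<Sum>v\<in>V. \<bar>\<theta> v\<bar>))"
proof -
  have abs_\<theta>: "(\<Sum>v\<in>V. \<bar>\<theta> v\<bar>) = (\<Sum>v\<in>V. \<theta> v)"
    using \<theta>_range by (intro sum.cong) auto
  have W_le: "\<forall>u\<in>V. \<forall>v\<in>V. W u v \<le> 1" and W_diag_le: "\<forall>v\<in>V. W v v \<le> 1"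
    using W_range by auto
  show ?thesis
    unfolding abs_\<theta>
    using expectation_card_rand_subset[OF finV \<theta>_range]
      expectation_Induced_rand_subset_le[OF finV W_le \<theta>_range]
      expectation_Cut_rand_subset_ge[OF finV W_sym W_diag_le \<theta>_range cover]
    by simp
qed

end
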